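(* Let $n \geqslant 1$ and $k \geqslant 1$ be integers, and let $U$ be the function defined in the context. Let $A, C \geqslant 0$ be integers with $B := n - A - C \geqslant 0$ and $0 \leqslant A - C < k$. For integers $C'$ and $c$ with $c \equiv C' \pmod{k+1}$ put $l_{C'}(c) = \frac{C' - c}{k+1}$. Then $$U(A, C) - U(A-k, C+k) = \sum_{c \equiv C \ (\mathrm{mod}\ k+1)} \sum_{j \geqslant 0} \binom{l_C(c)}{j} \binom{n}{c+j} \binom{n - c - j - l_C(c) - 1}{B - j} - \sum_{c \equiv C-1 \ (\mathrm{mod}\ k+1)} \sum_{j \geqslant 0} \binom{l_{C-1}(c)}{j} \binom{n}{c+j} \binom{n - c - j - l_{C-1}(c) - 1}{B - j},$$ where the outer sums run over all integers $c$ in the indicated residue class (only finitely many terms are nonzero).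
   Context: Binomial coefficients are generalized: for an integer (possibly negative) $m$ and integer $t$, $\binom{m}{t} = \frac{m(m-1)\cdots(m-t+1)}{t!}$ if $t \geqslant 0$ and $\binom{m}{t} = 0$ if $t < 0$. The multinomial coefficient is $\binom{n}{a, c} = \frac{n!}{a!\, c!\, (n-a-c)!}$ if $a, c, n-a-c \geqslant 0$ and $0$ otherwise. The function $U : \mathbb{Z}^2 \to \mathbb{Z}$ (depending on $n$ and $k$) is defined by: $U(a,c) = 0$ if $a < 0$, $c < 0$ or $n - a - c < 0$; for $a, c, n-a-c \geqslant 0$ with $a \geqslant c$, recursively (in decreasing order of $a$) $$U(a,c) = \binom{n}{a, c} - \binom{n}{a+1, c-1} - U(a+1, c) + U(a+1+k, c-1-k) + U(a+1+k, c-k);$$ and for $a, c, n-a-c \geqslant 0$ with $a < c$, $U(a,c) = U(c,a)$. *)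

theory Defs
  imports Main "HOL-Library.Groups_Big_Fun"
begin

definition binom :: "int \<Rightarrow> int \<Rightarrow> int" where
  "binom m t = (if t < 0 then 0 else (\<Prod>i<nat t. m - int i) div fact (nat t))"

definition multinom :: "int \<Rightarrow> int \<Rightarrow> int \<Rightarrow> int" where
  "multinom n a c = (if a \<ge> 0 \<and> c \<ge> 0 \<and> n - a - c \<ge> 0
     then fact (nat n) div (fact (nat a) * fact (nat c) * fact (nat (n - a - c))) else 0)"

function U :: "nat \<Rightarrow> nat \<Rightarrow> int \<Rightarrow> int \<Rightarrow> int" where
  "U n k a c =
    (if a < 0 \<or> c < 0 \<or> int n - a - c < 0 then 0
     else if a < c then U n k c a
     else multinom (int n) a c - multinom (int n) (a + 1) (c - 1) - U n k (a + 1) c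
          + U n k (a + 1 + int k) (c - 1 - int k) + U n k (a + 1 + int k) (c - int k))"
  by pat_completeness auto
termination
  by (relation "measures [\<lambda>(n, k, a, c). nat (int n + 1 - max a c),
                           \<lambda>(n, k, a, c). if a < c then 1 else 0]") auto

definition term_c :: "nat \<Rightarrow> nat \<Rightarrow> int \<Rightarrow> int \<Rightarrow> int \<Rightarrow> int" where
  "term_c n k B C' c =
    (if c mod (int k + 1) = C' mod (int k + 1) then
       (let l = (C' - c) div (int k + 1) in
        Sum_any (\<lambda>j::nat. binom l (int j) * binom (int n) (c + int j)
                            * binom (int n - c - int j - l - 1) (B - int j)))
     else 0)"

end

theory Submission
  imports Defs HOL.Binomial_Plus
begin

text \<open>Let \<open>S(b, l, c)\<close> be the inner sum over \<open>j\<close>, with \<open>l\<close> a free integer parameter,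
  and let \<open>T(b, c)\<close> be the sum of \<open>S(b, l, c - l(k+1))\<close> over \<open>l \<ge> 0\<close>. Pascal's rule, applied to the first and to the last
  binomial coefficient, gives \<open>S(b, l, c) + S(b-1, l, c) = S(b, l-1, c) + S(b-1, l-1, c+1)\<close>, and
  the two terms with \<open>l = -1\<close> add up to the multinomial coefficient. Telescoping along the
  progression, \<open>T(b, c) - T(b, c-1)\<close> satisfies the recursion defining \<open>U(n-b-c, c)\<close> and
  hence equals \<open>U\<close> for \<open>c \<le> a\<close>. The same recurrence yields the reflection
  \<open>S(b, l, c) = S(b, -1-l, n-b-c)\<close>, which turns the terms of the residue class sum with
  \<open>l\<^sub>C\<^sub>'(c) < 0\<close> into a second progression sum \<open>T(B, n-B-k-1-C')\<close>; the four
  progression sums then combine into \<open>U(A, C) - U(A-k, C+k)\<close>.\<close>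

declare U.simps[simp del]

lemma binom_neg [simp]: "t < 0 \<Longrightarrow> binom m t = 0"
  by (simp add: binom_def)

lemma binom_0 [simp]: "binom m 0 = 1"
  by (simp add: binom_def)

lemma binom_of_nat: "0 \<le> m \<Longrightarrow> 0 \<le> t \<Longrightarrow> binom m t = int (nat m choose nat t)"
  using gbinomial_nneg[of m "nat t", unfolded gbinomial_prod_rev]
  by (simp add: binom_def atLeast0LessThan)

lemma binom_eq_0: "0 \<le> m \<Longrightarrow> m < t \<Longrightarrow> binom m t = 0"
  by (simp add: binom_of_nat)

lemma binom_Pascal: "binom m t = binom (m - 1) t + binom (m - 1) (t - 1)"
proof (cases "t \<ge> 1")
  case True
  then have "nat t = Suc (nat (t - 1))" by simp
  then show ?thesis
    using True gbinomial_int_Suc_Suc[of "m - 1" "nat (t - 1)", unfolded gbinomial_prod_rev]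
    by (simp add: binom_def atLeast0LessThan)
next
  case False
  then show ?thesis by (cases "t = 0") auto
qed

lemma multinom_commute: "multinom n a c = multinom n c a"
  unfolding multinom_def by (auto simp: algebra_simps)

lemma multinom_eq_binom_binom:
  assumes "0 \<le> n"
  shows "multinom n (n - b - c) c = binom n c * binom (n - c) b"
proof (cases "0 \<le> c \<and> 0 \<le> b \<and> b + c \<le> n")
  case True
  define N cc bb where "N = nat n" and "cc = nat c" and "bb = nat b"
  have n: "n = int N" and c: "c = int cc" and b: "b = int bb" and le: "cc + bb \<le> N"
    using True assms by (auto simp: N_def cc_def bb_def nat_le_eq_zle simp flip: nat_add_distrib)
  have "fact cc * fact (N - cc) * (N choose cc) = fact N"
    and "fact bb * fact (N - cc - bb) * ((N - cc) choose bb) = fact (N - cc)"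
    using le binomial_fact_lemma[of bb "N - cc"] by (simp_all add: binomial_fact_lemma)
  then have "fact N = (N choose cc) * ((N - cc) choose bb) * (fact (N - cc - bb) * fact cc * fact bb)"
    by (metis mult.commute mult.left_commute)
  then have "(fact N :: int)
      = int ((N choose cc) * ((N - cc) choose bb)) * (fact (N - cc - bb) * fact cc * fact bb)"
    by (metis of_nat_fact of_nat_mult)
  moreover have "nat (n - b - c) = N - cc - bb" "nat (n - c) = N - cc" "0 \<le> n - c"
    using le by (simp_all add: n b c)
  ultimately show ?thesis
    using le by (simp add: multinom_def binom_of_nat n b c)
next
  case False
  then show ?thesis
    using assms by (cases "n < c") (auto simp: multinom_def binom_eq_0 not_le)
qed

lemma sum_atMost_Suc_shift_vanishing:
  fixes f :: "nat \<Rightarrow> 'a::ab_group_add"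
  assumes "f (Suc L) = 0"
  shows "(\<Sum>l\<le>L. f (Suc l)) = (\<Sum>l\<le>L. f l) - f 0"
  using sum.atMost_Suc_shift[of f L] sum.atMost_Suc[of f L] assms by simp

definition inner_sum :: "nat \<Rightarrow> int \<Rightarrow> int \<Rightarrow> int \<Rightarrow> int" where
  "inner_sum n b l c = (\<Sum>j\<le>nat b. binom l (int j) * binom (int n) (c + int j)
                                     * binom (int n - c - int j - l - 1) (b - int j))"

lemma inner_sum_eq_sum_atMost:
  assumes "nat b \<le> J"
  shows "inner_sum n b l c = (\<Sum>j\<le>J. binom l (int j) * binom (int n) (c + int j)
                                      * binom (int n - c - int j - l - 1) (b - int j))"
  unfolding inner_sum_def by (rule sum.mono_neutral_left) (use assms in auto)

lemma inner_sum_neg: "b < 0 \<Longrightarrow> inner_sum n b l c = 0"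
  by (simp add: inner_sum_def)

lemma inner_sum_eq_0_if_add_neg: "c + b < 0 \<Longrightarrow> inner_sum n b l c = 0"
  unfolding inner_sum_def by (cases "b < 0") (auto intro!: sum.neutral)

lemma inner_sum_eq_0_if_add_index_neg: "0 \<le> l \<Longrightarrow> c + l < 0 \<Longrightarrow> inner_sum n b l c = 0"
  unfolding inner_sum_def
proof (rule sum.neutral, intro ballI)
  fix j :: nat
  assume "0 \<le> l" "c + l < 0"
  then have "binom l (int j) = 0 \<or> binom (int n) (c + int j) = 0"
    by (cases "l < int j") (simp_all add: binom_eq_0)
  then show "binom l (int j) * binom (int n) (c + int j) * binom (int n - c - int j - l - 1) (b - int j) = 0"
    by auto
qed

lemma inner_sum_eq_0_if_gt: "int n < c \<Longrightarrow> inner_sum n b l c = 0"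
  unfolding inner_sum_def by (rule sum.neutral) (simp add: binom_eq_0)

lemma inner_sum_Pascal:
  "inner_sum n b l c + inner_sum n (b - 1) l c
     = inner_sum n b (l - 1) c + inner_sum n (b - 1) (l - 1) (c + 1)"
proof -
  define J where "J = Suc (nat b)"
  define X where "X j = binom (int n) (c + int j) * binom (int n - c - int j - l) (b - int j)" for j
  define g where "g j = binom (l - 1) (int j - 1) * X j" for j
  have J: "nat b \<le> J" "nat (b - 1) \<le> J"
    by (auto simp: J_def)
  have Pascal_last: "binom (int n - c - int j - l) (b - int j)
      = binom (int n - c - int j - l - 1) (b - int j) + binom (int n - c - int j - l - 1) (b - 1 - int j)"
    for j
    using binom_Pascal[of "int n - c - int j - l" "b - int j"] by (simp add: algebra_simps)
  have "inner_sum n b l c + inner_sum n (b - 1) l c = (\<Sum>j\<le>J. binom l (int j) * X j)"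
    unfolding inner_sum_eq_sum_atMost[OF J(1)] inner_sum_eq_sum_atMost[OF J(2)] X_def Pascal_last
    by (simp add: sum.distrib algebra_simps)
  also have "\<dots> = (\<Sum>j\<le>J. binom (l - 1) (int j) * X j) + (\<Sum>j\<le>J. g j)"
    unfolding g_def binom_Pascal[of l] by (simp add: sum.distrib algebra_simps)
  also have "(\<Sum>j\<le>J. g j) = (\<Sum>j\<le>J. g (Suc j))"
    by (subst sum_atMost_Suc_shift_vanishing) (simp_all add: g_def X_def J_def)
  also have "(\<Sum>j\<le>J. binom (l - 1) (int j) * X j) = inner_sum n b (l - 1) c"
    unfolding inner_sum_eq_sum_atMost[OF J(1)] X_def by (rule sum.cong) (simp_all add: algebra_simps)
  also have "(\<Sum>j\<le>J. g (Suc j)) = inner_sum n (b - 1) (l - 1) (c + 1)"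
    unfolding inner_sum_eq_sum_atMost[OF J(2)] X_def g_def
    by (rule sum.cong) (simp_all add: algebra_simps)
  finally show ?thesis .
qed

lemma inner_sum_zero: "inner_sum n b 0 c = binom (int n) c * binom (int n - c - 1) b"
proof -
  have "inner_sum n b 0 c = (\<Sum>j\<in>{0}. binom 0 (int j) * binom (int n) (c + int j)
                                        * binom (int n - c - int j - 0 - 1) (b - int j))"
    unfolding inner_sum_def by (rule sum.mono_neutral_right) (auto simp: binom_eq_0)
  then show ?thesis by simp
qed

lemma inner_sum_zero_add:
  "inner_sum n b 0 c + inner_sum n (b - 1) 0 c = multinom (int n) (int n - b - c) c"
  using binom_Pascal[of "int n - c" b]
  by (simp add: inner_sum_zero multinom_eq_binom_binom distrib_left)

lemma inner_sum_minus_one_add: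
  "inner_sum n b (-1) c + inner_sum n (b - 1) (-1) (c + 1) = multinom (int n) (int n - b - c) c"
  using inner_sum_Pascal[of n b 0 c] inner_sum_zero_add[of n b c] by simp

lemma inner_sum_reflect: "inner_sum n b (int l) c = inner_sum n b (-1 - int l) (int n - b - c)"
proof (induction "nat (b + 1) + l" arbitrary: b l c rule: less_induct)
  case less
  show ?case
  proof (cases "b < 0")
    case True
    then show ?thesis by (simp add: inner_sum_neg)
  next
    case False
    show ?thesis
    proof (cases l)
      case 0
      have "inner_sum n (b - 1) 0 c = inner_sum n (b - 1) (-1) (int n - b - c + 1)"
        using less(1)[of "b - 1" 0 c] False 0 by (simp add: algebra_simps)
      then show ?thesis
        using 0 inner_sum_zero_add[of n b c] inner_sum_minus_one_add[of n b "int n - b - c"]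
          multinom_commute[of "int n" c] by simp
    next
      case (Suc m)
      define c' where "c' = int n - b - c"
      have smaller: "nat (b + 1) + m < nat (b + 1) + l" "nat (b - 1 + 1) + m < nat (b + 1) + l"
        "nat (b - 1 + 1) + Suc m < nat (b + 1) + l"
        using False Suc by auto
      have "inner_sum n b (int m) c = inner_sum n b (-1 - int m) c'"
        using less(1)[OF smaller(1)] by (simp add: c'_def)
      moreover have "inner_sum n (b - 1) (int m) (c + 1) = inner_sum n (b - 1) (-1 - int m) c'"
        using less(1)[OF smaller(2)] by (simp add: c'_def algebra_simps)
      moreover have "inner_sum n (b - 1) (int m + 1) c = inner_sum n (b - 1) (-2 - int m) (c' + 1)"
      proof -
        have "int (Suc m) = int m + 1" "-1 - int (Suc m) = -2 - int m"
          "int n - (b - 1) - c = c' + 1"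
          by (simp_all add: c'_def)
        then show ?thesis
          using less(1)[OF smaller(3), of c] by (simp only:)
      qed
      moreover have "inner_sum n b (int m + 1) c + inner_sum n (b - 1) (int m + 1) c
          = inner_sum n b (int m) c + inner_sum n (b - 1) (int m) (c + 1)"
        using inner_sum_Pascal[of n b "int m + 1" c] by simp
      moreover have "inner_sum n b (-1 - int m) c' + inner_sum n (b - 1) (-1 - int m) c'
          = inner_sum n b (-2 - int m) c' + inner_sum n (b - 1) (-2 - int m) (c' + 1)"
        using inner_sum_Pascal[of n b "-1 - int m" c'] by simp
      ultimately have "inner_sum n b (int m + 1) c = inner_sum n b (-2 - int m) c'"
        by linarith
      moreover have "int l = int m + 1" "-1 - int l = -2 - int m"
        using Suc by simp_all
      ultimately show ?thesis
        by (simp only: c'_def)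
    qed
  qed
qed

definition progression_sum :: "nat \<Rightarrow> nat \<Rightarrow> int \<Rightarrow> int \<Rightarrow> int" where
  "progression_sum n k b c = (\<Sum>l\<le>nat (c + b). inner_sum n b (int l) (c - int l * (int k + 1)))"

lemma progression_sum_eq_sum_atMost:
  assumes "nat (c + b) \<le> L"
  shows "progression_sum n k b c = (\<Sum>l\<le>L. inner_sum n b (int l) (c - int l * (int k + 1)))"
  unfolding progression_sum_def
proof (rule sum.mono_neutral_left)
  show "\<forall>l\<in>{..L} - {..nat (c + b)}. inner_sum n b (int l) (c - int l * (int k + 1)) = 0"
  proof
    fix l assume "l \<in> {..L} - {..nat (c + b)}"
    then have "c + b < int l"
      by auto
    moreover have "int l \<le> int l * (int k + 1)"
      by (simp add: algebra_simps)
    ultimately show "inner_sum n b (int l) (c - int l * (int k + 1)) = 0"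
      by (intro inner_sum_eq_0_if_add_neg) linarith
  qed
qed (use assms in auto)

lemma progression_sum_neg_c:
  assumes "c < 0"
  shows "progression_sum n k b c = 0"
  unfolding progression_sum_def
proof (intro sum.neutral ballI inner_sum_eq_0_if_add_index_neg)
  fix l :: nat
  show "c - int l * (int k + 1) + int l < 0"
    by (simp add: algebra_simps less_le_trans[OF assms])
qed simp

lemma progression_sum_neg_b: "b < 0 \<Longrightarrow> progression_sum n k b c = 0"
  by (simp add: progression_sum_def inner_sum_neg)

lemma progression_sum_recurrence:
  "progression_sum n k b c - progression_sum n k b (c - 1 - int k)
     + progression_sum n k (b - 1) c - progression_sum n k (b - 1) (c - int k)
   = multinom (int n) (int n - b - c) c"
proof -
  define K where "K = int k + 1"
  define L where "L = Suc (nat (c + b))"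
  define F where "F l = inner_sum n b (int l - 1) (c - int l * K)" for l
  define G where "G l = inner_sum n (b - 1) (int l - 1) (c - int l * K + 1)" for l
  have L: "nat (c + b) \<le> L" "nat (c - 1 - int k + b) \<le> L"
    "nat (c + (b - 1)) \<le> L" "nat (c - int k + (b - 1)) \<le> L"
    by (auto simp: L_def)
  have "progression_sum n k b c + progression_sum n k (b - 1) c = (\<Sum>l\<le>L. F l) + (\<Sum>l\<le>L. G l)"
    unfolding progression_sum_eq_sum_atMost[OF L(1)] progression_sum_eq_sum_atMost[OF L(3)]
    by (simp add: F_def G_def K_def inner_sum_Pascal flip: sum.distrib)
  moreover have "progression_sum n k b (c - 1 - int k) = (\<Sum>l\<le>L. F (Suc l))"
    unfolding progression_sum_eq_sum_atMost[OF L(2)] F_def K_def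
    by (rule sum.cong) (simp_all add: algebra_simps)
  moreover have "progression_sum n k (b - 1) (c - int k) = (\<Sum>l\<le>L. G (Suc l))"
    unfolding progression_sum_eq_sum_atMost[OF L(4)] G_def K_def
    by (rule sum.cong) (simp_all add: algebra_simps)
  moreover have "F (Suc L) = 0" "G (Suc L) = 0"
  proof -
    have "int (Suc L) \<le> int (Suc L) * K"
      by (simp add: K_def algebra_simps)
    moreover have "c + b < int (Suc L)"
      by (simp add: L_def)
    ultimately have "c - int (Suc L) * K + b < 0" "c - int (Suc L) * K + 1 + (b - 1) < 0"
      by linarith+
    then show "F (Suc L) = 0" "G (Suc L) = 0"
      unfolding F_def G_def by (simp_all only: inner_sum_eq_0_if_add_neg)
  qed
  moreover have "F 0 + G 0 = multinom (int n) (int n - b - c) c"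
    using inner_sum_minus_one_add[of n b c] by (simp add: F_def G_def)
  ultimately show ?thesis
    by (simp add: sum_atMost_Suc_shift_vanishing)
qed

definition U_closed :: "nat \<Rightarrow> nat \<Rightarrow> int \<Rightarrow> int \<Rightarrow> int" where
  "U_closed n k b c = progression_sum n k b c - progression_sum n k b (c - 1)"

lemma U_closed_recurrence:
  "U_closed n k b c - U_closed n k b (c - 1 - int k) + U_closed n k (b - 1) c
     - U_closed n k (b - 1) (c - int k)
   = multinom (int n) (int n - b - c) c - multinom (int n) (int n - b - (c - 1)) (c - 1)"
proof -
  have e: "c - 1 - 1 - int k = c - 1 - int k - 1" "c - int k - 1 = c - 1 - int k"
    by simp_all
  show ?thesis
    using progression_sum_recurrence[of n k b c]
      progression_sum_recurrence[of n k b "c - 1", unfolded e(1)]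
    unfolding U_closed_def e(2) by linarith
qed

lemma U_commute: "U n k a c = U n k c a"
proof -
  have "U n k a c = U n k c a" if "a < c" for a c
  proof (cases "a < 0 \<or> c < 0 \<or> int n - a - c < 0")
    case True
    then show ?thesis by (subst (1 2) U.simps) auto
  next
    case False
    then show ?thesis using that by (subst U.simps) simp
  qed
  then show ?thesis
    by (cases a c rule: linorder_cases) auto
qed

lemma U_eq_U_closed: "c \<le> a \<Longrightarrow> U n k a c = U_closed n k (int n - a - c) c"
proof (induction "nat (int n + 1 - a)" arbitrary: a c rule: less_induct)
  case less
  show ?case
  proof (cases "a < 0 \<or> c < 0 \<or> int n - a - c < 0")
    case True
    then have "c < 0 \<or> int n - a - c < 0"
      using less.prems by auto
    then show ?thesis
      using True by (auto simp: U.simps U_closed_def progression_sum_neg_c progression_sum_neg_b)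
  next
    case False
    then have "a \<le> int n"
      by simp
    then have IH: "U n k (a + 1) c = U_closed n k (int n - a - c - 1) c"
      "U n k (a + 1 + int k) (c - 1 - int k) = U_closed n k (int n - a - c) (c - 1 - int k)"
      "U n k (a + 1 + int k) (c - int k) = U_closed n k (int n - a - c - 1) (c - int k)"
      using less.prems by (simp_all add: less.hyps algebra_simps)
    have "U n k a c = multinom (int n) a c - multinom (int n) (a + 1) (c - 1) - U n k (a + 1) c
        + U n k (a + 1 + int k) (c - 1 - int k) + U n k (a + 1 + int k) (c - int k)"
      using False less.prems by (subst U.simps) simp
    then show ?thesis
      using U_closed_recurrence[of n k "int n - a - c" c] unfolding IH by simp
  qed
qed

lemma Sum_any_residue_class:
  fixes f :: "int \<Rightarrow> 'a::comm_monoid_add" and K :: int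
  assumes "0 < K"
    and supp: "\<And>x. f x \<noteq> 0 \<Longrightarrow> x mod K = c mod K \<and> \<bar>x - c\<bar> \<le> int L"
  shows "Sum_any f = (\<Sum>l\<le>L. f (c - int l * K)) + (\<Sum>l\<le>L. f (c + (int l + 1) * K))"
proof -
  define g where "g l = c - int l * K" for l
  define h where "h l = c + (int l + 1) * K" for l
  have "{x. f x \<noteq> 0} \<subseteq> g ` {..L} \<union> h ` {..L}"
  proof
    fix x assume "x \<in> {x. f x \<noteq> 0}"
    then have "c mod K = x mod K" and bound: "\<bar>x - c\<bar> \<le> int L"
      using supp by auto
    then have "K dvd c - x"
      by (simp add: mod_eq_dvd_iff)
    then obtain q where q: "c - x = K * q"
      by (elim dvdE)
    have "\<bar>q\<bar> \<le> \<bar>K * q\<bar>"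
      using mult_right_mono[of 1 K "\<bar>q\<bar>"] assms(1) by (simp add: abs_mult)
    then have "\<bar>q\<bar> \<le> int L"
      using q bound by linarith
    then show "x \<in> g ` {..L} \<union> h ` {..L}"
    proof (cases "0 \<le> q")
      case True
      then have "x = g (nat q)" "nat q \<le> L"
        using q \<open>\<bar>q\<bar> \<le> int L\<close> by (auto simp: g_def algebra_simps)
      then show ?thesis by blast
    next
      case False
      then have "x = h (nat (- q - 1))" "nat (- q - 1) \<le> L"
        using q \<open>\<bar>q\<bar> \<le> int L\<close> by (auto simp: h_def algebra_simps)
      then show ?thesis by blast
    qed
  qed
  moreover have "g ` {..L} \<inter> h ` {..L} = {}"
  proof -
    have "g l < h m" for l m
    proof -
      have "0 \<le> int l * K" "0 < (int m + 1) * K"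
        using assms(1) by simp_all
      then show ?thesis
        unfolding g_def h_def by linarith
    qed
    then show ?thesis
      by (auto simp: image_iff) (metis less_irrefl)
  qed
  moreover have "inj_on g {..L}" "inj_on h {..L}"
    using assms(1) by (auto simp: inj_on_def g_def h_def)
  ultimately have "Sum_any f = sum f (g ` {..L}) + sum f (h ` {..L})"
    by (simp add: Sum_any.expand_superset[of "g ` {..L} \<union> h ` {..L}"] sum.union_disjoint)
  also have "\<dots> = (\<Sum>l\<le>L. f (g l)) + (\<Sum>l\<le>L. f (h l))"
    using \<open>inj_on g {..L}\<close> \<open>inj_on h {..L}\<close> by (simp add: sum.reindex)
  finally show ?thesis
    by (simp add: g_def h_def)
qed

lemma term_c_eq_inner_sum:
  assumes "0 \<le> B"
  shows "term_c n k B C' c = (if c mod (int k + 1) = C' mod (int k + 1)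
           then inner_sum n B ((C' - c) div (int k + 1)) c else 0)"
proof -
  have "Sum_any (\<lambda>j::nat. binom l (int j) * binom (int n) (c + int j)
                             * binom (int n - c - int j - l - 1) (B - int j))
      = inner_sum n B l c" for l
    unfolding inner_sum_def
  proof (rule Sum_any.expand_superset)
    show "{j. binom l (int j) * binom (int n) (c + int j)
              * binom (int n - c - int j - l - 1) (B - int j) \<noteq> 0} \<subseteq> {..nat B}"
    proof (rule subsetI, rule ccontr)
      fix j
      assume "j \<in> {j. binom l (int j) * binom (int n) (c + int j)
                         * binom (int n - c - int j - l - 1) (B - int j) \<noteq> 0}" "j \<notin> {..nat B}"
      then show False
        using assms by auto
    qed
  qed simp
  then show ?thesis
    unfolding term_c_def Let_def by simp
qed

lemma term_c_nonzero_imp: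
  assumes "0 \<le> B" and "term_c n k B C' c \<noteq> 0"
  shows "c mod (int k + 1) = C' mod (int k + 1)" and "0 \<le> c + B" and "c \<le> int n"
proof -
  have "c mod (int k + 1) = C' mod (int k + 1)"
    and nz: "inner_sum n B ((C' - c) div (int k + 1)) c \<noteq> 0"
    using assms term_c_eq_inner_sum[OF assms(1)] by (auto split: if_splits)
  then show "c mod (int k + 1) = C' mod (int k + 1)"
    by simp
  from nz show "0 \<le> c + B" "c \<le> int n"
    using inner_sum_eq_0_if_add_neg inner_sum_eq_0_if_gt by force+
qed

lemma term_c_nonneg_index:
  assumes "0 \<le> B"
  shows "term_c n k B C' (C' - int l * (int k + 1)) = inner_sum n B (int l) (C' - int l * (int k + 1))"
proof -
  have "(C' - int l * (int k + 1)) mod (int k + 1) = C' mod (int k + 1)"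
    using mod_mult_self1[of C' "- int l" "int k + 1"] by simp
  then show ?thesis
    by (simp add: term_c_eq_inner_sum[OF assms])
qed

lemma term_c_neg_index:
  assumes "0 \<le> B"
  shows "term_c n k B C' (C' + (int l + 1) * (int k + 1))
           = inner_sum n B (int l) (int n - B - int k - 1 - C' - int l * (int k + 1))"
proof -
  define K where "K = int k + 1"
  have "(C' - (C' + (int l + 1) * K)) div K = -1 - int l"
  proof -
    have "C' - (C' + (int l + 1) * K) = (-1 - int l) * K"
      by (simp add: algebra_simps)
    then show ?thesis
      by (simp add: K_def)
  qed
  then have "term_c n k B C' (C' + (int l + 1) * K) = inner_sum n B (-1 - int l) (C' + (int l + 1) * K)"
    by (simp add: term_c_eq_inner_sum[OF assms] K_def)
  also have "\<dots> = inner_sum n B (int l) (int n - B - int k - 1 - C' - int l * K)"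
    by (simp add: inner_sum_reflect[of n B l] K_def algebra_simps)
  finally show ?thesis
    by (simp add: K_def)
qed

lemma Sum_any_term_c:
  assumes "0 \<le> B"
  shows "finite {c. term_c n k B C' c \<noteq> 0}"
    and "Sum_any (term_c n k B C')
           = progression_sum n k B C' + progression_sum n k B (int n - B - int k - 1 - C')"
proof -
  define L where "L = nat (\<bar>C'\<bar> + B + int n)"
  have supp: "c mod (int k + 1) = C' mod (int k + 1) \<and> \<bar>c - C'\<bar> \<le> int L"
    if "term_c n k B C' c \<noteq> 0" for c
    using term_c_nonzero_imp[OF assms that] assms by (auto simp: L_def)
  then have "{c. term_c n k B C' c \<noteq> 0} \<subseteq> {C' - int L..C' + int L}"
    by fastforce
  then show "finite {c. term_c n k B C' c \<noteq> 0}"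
    using finite_subset by blast
  have "nat (C' + B) \<le> L" "nat (int n - B - int k - 1 - C' + B) \<le> L"
    using assms by (auto simp: L_def)
  then show "Sum_any (term_c n k B C')
      = progression_sum n k B C' + progression_sum n k B (int n - B - int k - 1 - C')"
    using Sum_any_residue_class[where f = "term_c n k B C'", OF _ supp]
    by (simp add: progression_sum_eq_sum_atMost term_c_nonneg_index[OF assms]
        term_c_neg_index[OF assms])
qed

theorem lemma4p21:
  fixes n k :: nat and A C :: int
  assumes "n \<ge> 1" and "k \<ge> 1" and "A \<ge> 0" and "C \<ge> 0"
    and "int n - A - C \<ge> 0" and "0 \<le> A - C" and "A - C < int k"
  shows "finite {c. term_c n k (int n - A - C) C c \<noteq> 0}
    \<and> finite {c. term_c n k (int n - A - C) (C - 1) c \<noteq> 0}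
    \<and> U n k A C - U n k (A - int k) (C + int k)
      = Sum_any (term_c n k (int n - A - C) C) - Sum_any (term_c n k (int n - A - C) (C - 1))"
proof -
  define B where "B = int n - A - C"
  have B: "0 \<le> B"
    using assms by (simp add: B_def)
  have "int n - B - int k - 1 - C = A - int k - 1" "int n - B - int k - 1 - (C - 1) = A - int k"
    by (simp_all add: B_def)
  note sums = Sum_any_term_c[OF B, of n k C, unfolded this(1)]
    Sum_any_term_c[OF B, of n k "C - 1", unfolded this(2)]
  have "U n k A C = U_closed n k B C"
    using assms by (simp add: U_eq_U_closed B_def)
  moreover have "U n k (A - int k) (C + int k) = U_closed n k B (A - int k)"
    using assms U_eq_U_closed[of "A - int k" "C + int k" n k]
    by (simp add: U_commute[of n k "A - int k"] B_def algebra_simps)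
  ultimately show ?thesis
    using sums unfolding B_def[symmetric] U_closed_def by simp
qed

end
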